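(* Let $A$ be a unital C*-algebra with unit $1_A$, let $P$ be a (right-reversible) Ore semigroup with identity $e$ and enveloping group $G = P^{-1}P$, and let $\alpha: P \to \mathrm{End}(A)$ be an action of $P$ on $A$ by injective unital-or-not endomorphisms $\alpha_p$, $p\in P$, with $\alpha_e=\mathrm{id}$. Let $(B, G, \beta)$ together with the injective $*$-homomorphism $\iota: A \to B$ be the minimal automorphic dilation of $(A,P,\alpha)$, i.e. $\beta$ is an action of $G$ on the C*-algebra $B$ by automorphisms with $\beta_p\circ\iota = \iota\circ\alpha_p$ for all $p\in P$ and $\bigcup_{p\in P}\beta_p^{-1}(\iota(A))$ dense in $B$. Let $u_g$, $g\in G$, be the unitaries in the multiplier algebra of the crossed product $B\rtimes_\beta G$ implementing $\beta$ (so $u_g b u_g^* = \beta_g(b)$). Then the net $(u_p^*\,\iota(1_A)\,u_p)_{p\in P}$, indexed by $P$ directed by the preorder $p\le r \iff r\in Pp$, is an approximate unit for $B$.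
   Context: A (right-reversible) Ore semigroup is a cancellative semigroup $P$ with $Ps\cap Pt\neq\emptyset$ for all $s,t\in P$; such $P$ embeds in a group $G$ with $G=P^{-1}P$ (the enveloping group, unique up to isomorphism). The preorder $p\le r$ iff $r\in Pp$ makes $P$ a directed set. For such a system with injective endomorphisms, a minimal automorphic dilation $(B,G,\beta,\iota)$ as described exists and is unique up to isomorphism (Laca). Note $u_p^*\iota(1_A)u_p=\beta_p^{-1}(\iota(1_A))\in B$. *)

theory Defs
  imports "HOL-Analysis.Analysis" "HOL-Algebra.Group"
begin

definition cstar_algebra ::
  "(complex \<Rightarrow> 'a::{real_normed_algebra,banach} \<Rightarrow> 'a) \<Rightarrow> ('a \<Rightarrow> 'a) \<Rightarrow> bool" where
  "cstar_algebra sc st \<longleftrightarrow>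
     (\<forall>r x. sc (complex_of_real r) x = scaleR r x) \<and>
     (\<forall>c d x. sc (c + d) x = sc c x + sc d x) \<and>
     (\<forall>c x y. sc c (x + y) = sc c x + sc c y) \<and>
     (\<forall>c d x. sc c (sc d x) = sc (c * d) x) \<and>
     (\<forall>c x y. sc c (x * y) = sc c x * y \<and> sc c (x * y) = x * sc c y) \<and>
     (\<forall>c x. norm (sc c x) = cmod c * norm x) \<and>
     (\<forall>x. st (st x) = x) \<and>
     (\<forall>x y. st (x + y) = st x + st y) \<and>
     (\<forall>c x. st (sc c x) = sc (cnj c) (st x)) \<and>
     (\<forall>x y. st (x * y) = st y * st x) \<and>
     (\<forall>x. norm (st x * x) = norm x ^ 2)"

definition star_hom ::
  "(complex \<Rightarrow> 'a::{real_normed_algebra,banach} \<Rightarrow> 'a) \<Rightarrow> ('a \<Rightarrow> 'a) \<Rightarrow>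
   (complex \<Rightarrow> 'b::{real_normed_algebra,banach} \<Rightarrow> 'b) \<Rightarrow> ('b \<Rightarrow> 'b) \<Rightarrow> ('a \<Rightarrow> 'b) \<Rightarrow> bool" where
  "star_hom sc st sc' st' f \<longleftrightarrow>
     (\<forall>x y. f (x + y) = f x + f y) \<and>
     (\<forall>c x. f (sc c x) = sc' c (f x)) \<and>
     (\<forall>x y. f (x * y) = f x * f y) \<and>
     (\<forall>x. f (st x) = st' (f x))"

definition star_aut ::
  "(complex \<Rightarrow> 'a::{real_normed_algebra,banach} \<Rightarrow> 'a) \<Rightarrow> ('a \<Rightarrow> 'a) \<Rightarrow> ('a \<Rightarrow> 'a) \<Rightarrow> bool" where
  "star_aut sc st f \<longleftrightarrow> star_hom sc st sc st f \<and> bij f"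

definition ore_enveloping :: "('g, 'z) monoid_scheme \<Rightarrow> 'g set \<Rightarrow> bool" where
  "ore_enveloping G P \<longleftrightarrow>
     group G \<and> P \<subseteq> carrier G \<and> \<one>\<^bsub>G\<^esub> \<in> P \<and>
     (\<forall>p\<in>P. \<forall>q\<in>P. p \<otimes>\<^bsub>G\<^esub> q \<in> P) \<and>
     (\<forall>s\<in>P. \<forall>t\<in>P. \<exists>p\<in>P. \<exists>q\<in>P. p \<otimes>\<^bsub>G\<^esub> s = q \<otimes>\<^bsub>G\<^esub> t) \<and>
     carrier G = {inv\<^bsub>G\<^esub> p \<otimes>\<^bsub>G\<^esub> q | p q. p \<in> P \<and> q \<in> P}"

text \<open>The filter of tails of the directed set (P, \<le>) with p \<le> r iff r \<in> P p.\<close>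
definition ore_net :: "('g, 'z) monoid_scheme \<Rightarrow> 'g set \<Rightarrow> 'g filter" where
  "ore_net G P = (INF p\<in>P. principal {r \<in> P. \<exists>s\<in>P. r = s \<otimes>\<^bsub>G\<^esub> p})"

definition approximate_unit ::
  "('b::{real_normed_algebra,banach} \<Rightarrow> 'b) \<Rightarrow> 'i set \<Rightarrow> 'i filter \<Rightarrow> ('i \<Rightarrow> 'b) \<Rightarrow> bool" where
  "approximate_unit st I F e \<longleftrightarrow>
     (\<forall>i\<in>I. (\<exists>y. e i = st y * y) \<and> norm (e i) \<le> 1) \<and>
     (\<forall>b. ((\<lambda>i. e i * b) \<longlongrightarrow> b) F \<and> ((\<lambda>i. b * e i) \<longlongrightarrow> b) F)"

end

theory Submission
  imports Defs
begin

text \<open>With \<open>e\<^sub>p = \<beta>\<^sub>p\<^sup>-\<^sup>1(\<iota>(1))\<close>, covariance gives \<open>u\<^sub>p\<^sup>* \<iota>(1) u\<^sub>p = e\<^sub>p\<close>, a projection and hence a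
  contraction. For \<open>q = s p\<close> one has \<open>e\<^sub>q = \<beta>\<^sub>p\<^sup>-\<^sup>1(\<beta>\<^sub>s\<^sup>-\<^sup>1(\<iota>(1)))\<close> and
  \<open>\<iota>(a) = \<beta>\<^sub>s\<^sup>-\<^sup>1(\<iota>(\<alpha>\<^sub>s(a)))\<close>, so \<open>e\<^sub>q\<close> acts as a unit on \<open>\<beta>\<^sub>p\<^sup>-\<^sup>1(\<iota>(A))\<close> for all \<open>q \<ge> p\<close>.
  Thus every element of the dense set \<open>\<Union>\<^sub>p \<beta>\<^sub>p\<^sup>-\<^sup>1(\<iota>(A))\<close> is eventually fixed by
  multiplication with \<open>e\<^sub>q\<close>, and a net of contractions with this property converges
  to the identity everywhere.\<close>

lemma tendsto_nonexpansive_fixing_dense: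
  fixes T :: "'i \<Rightarrow> 'a::metric_space \<Rightarrow> 'a"
  assumes nonexp: "eventually (\<lambda>i. \<forall>x y. dist (T i x) (T i y) \<le> dist x y) F"
    and dense: "closure S = UNIV"
    and fixed: "\<forall>x\<in>S. eventually (\<lambda>i. T i x = x) F"
  shows "((\<lambda>i. T i b) \<longlongrightarrow> b) F"
proof (rule tendstoI)
  fix \<epsilon> :: real assume "\<epsilon> > 0"
  moreover have "b \<in> closure S" using dense by simp
  ultimately obtain x where "x \<in> S" and x: "dist x b < \<epsilon>/2"
    using closure_approachable[of b S] by (meson half_gt_zero)
  have "eventually (\<lambda>i. T i x = x) F" using fixed \<open>x \<in> S\<close> by blast
  with nonexp have "eventually (\<lambda>i. dist (T i b) (T i x) \<le> dist b x \<and> T i x = x) F"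
    by eventually_elim blast
  then show "eventually (\<lambda>i. dist (T i b) b < \<epsilon>) F"
  proof (rule eventually_mono)
    fix i assume i: "dist (T i b) (T i x) \<le> dist b x \<and> T i x = x"
    have "dist (T i b) b \<le> dist (T i b) (T i x) + dist (T i x) b" by (rule dist_triangle)
    also have "\<dots> \<le> dist x b + dist x b" using i by (metis add_mono dist_commute order_refl)
    also have "\<dots> < \<epsilon>" using x by simp
    finally show "dist (T i b) b < \<epsilon>" .
  qed
qed

lemma approximate_unit_fixing_dense:
  fixes e :: "'i \<Rightarrow> 'b::{real_normed_algebra,banach}"
  assumes pos: "\<forall>i\<in>I. (\<exists>y. e i = st y * y) \<and> norm (e i) \<le> 1"
    and ev: "eventually (\<lambda>i. i \<in> I) F"
    and dense: "closure S = UNIV"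
    and fixed: "\<forall>x\<in>S. eventually (\<lambda>i. e i * x = x \<and> x * e i = x) F"
  shows "approximate_unit st I F e"
  unfolding approximate_unit_def
proof (intro conjI allI)
  have fixed_left: "\<forall>x\<in>S. eventually (\<lambda>i. e i * x = x) F"
    and fixed_right: "\<forall>x\<in>S. eventually (\<lambda>i. x * e i = x) F"
    using fixed by (auto elim: eventually_mono)
  have contr: "eventually (\<lambda>i. norm (e i) \<le> 1) F"
    using ev pos by (auto elim: eventually_mono)
  fix b
  have "eventually (\<lambda>i. \<forall>x y. dist (e i * x) (e i * y) \<le> dist x y) F"
    using contr
  proof (rule eventually_mono, intro allI)
    fix i x y assume "norm (e i) \<le> 1"
    then show "dist (e i * x) (e i * y) \<le> dist x y"
      unfolding dist_norm right_diff_distrib[symmetric]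
      by (meson mult_left_le_one_le norm_ge_zero norm_mult_ineq order_trans)
  qed
  then show "((\<lambda>i. e i * b) \<longlongrightarrow> b) F"
    using dense fixed_left by (rule tendsto_nonexpansive_fixing_dense)
  have "eventually (\<lambda>i. \<forall>x y. dist (x * e i) (y * e i) \<le> dist x y) F"
    using contr
  proof (rule eventually_mono, intro allI)
    fix i x y assume "norm (e i) \<le> 1"
    then show "dist (x * e i) (y * e i) \<le> dist x y"
      unfolding dist_norm left_diff_distrib[symmetric]
      by (meson mult_right_le_one_le norm_ge_zero norm_mult_ineq order_trans)
  qed
  then show "((\<lambda>i. b * e i) \<longlongrightarrow> b) F"
    using dense fixed_right by (rule tendsto_nonexpansive_fixing_dense)
qed (use pos in auto)

lemma approximate_unit_cong:
  assumes "eventually (\<lambda>i. i \<in> I) F" and "\<And>i. i \<in> I \<Longrightarrow> e i = e' i"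
  shows "approximate_unit st I F e \<longleftrightarrow> approximate_unit st I F e'"
proof -
  have "eventually (\<lambda>i. e i = e' i) F" using assms by (auto elim: eventually_mono)
  then have "((\<lambda>i. e i * b) \<longlongrightarrow> b) F \<longleftrightarrow> ((\<lambda>i. e' i * b) \<longlongrightarrow> b) F"
    and "((\<lambda>i. b * e i) \<longlongrightarrow> b) F \<longleftrightarrow> ((\<lambda>i. b * e' i) \<longlongrightarrow> b) F" for b
    by (auto intro!: tendsto_cong elim: eventually_mono)
  then show ?thesis using assms(2) unfolding approximate_unit_def by simp
qed

lemma cstar_norm_le_one_if_eq_star_mult_self:
  assumes "cstar_algebra sc st" and "e = st e * e"
  shows "norm e \<le> 1"
proof -
  have "norm e = norm e ^ 2"
    using assms unfolding cstar_algebra_def by metis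
  then have "norm e * (norm e - 1) = 0" by (simp add: power2_eq_square algebra_simps)
  then show ?thesis by auto
qed

lemma cstar_star_unit:
  assumes "cstar_algebra sc st" and "\<forall>x. e * x = x \<and> x * e = x"
  shows "st e = e"
proof -
  have "st e = st (st e) * st e"
    using assms unfolding cstar_algebra_def by metis
  also have "\<dots> = e" using assms unfolding cstar_algebra_def by metis
  finally show ?thesis .
qed

lemma star_hom_eq_star_mult_self:
  fixes f :: "'a::{real_normed_algebra,banach} \<Rightarrow> 'b::{real_normed_algebra,banach}"
  assumes "star_hom sc st sc' st' f" and "x = st x * x"
  shows "f x = st' (f x) * f x"
  using assms unfolding star_hom_def by metis

lemma unitary_rep_one:
  fixes u :: "'g \<Rightarrow> 'm::semigroup_mult"
  assumes "group G" and unit: "\<forall>x. e * x = x \<and> x * e = x"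
    and unitary: "\<forall>g\<in>carrier G. st (u g) * u g = e \<and> u g * st (u g) = e"
    and mult: "\<forall>g\<in>carrier G. \<forall>h\<in>carrier G. u (g \<otimes>\<^bsub>G\<^esub> h) = u g * u h"
  shows "u \<one>\<^bsub>G\<^esub> = e"
proof -
  have one_in: "\<one>\<^bsub>G\<^esub> \<in> carrier G" using \<open>group G\<close> by (simp add: group.is_monoid monoid.one_closed)
  then have "u \<one>\<^bsub>G\<^esub> = u \<one>\<^bsub>G\<^esub> * u \<one>\<^bsub>G\<^esub>"
    using mult \<open>group G\<close> by (metis group.is_monoid monoid.l_one)
  then have "st (u \<one>\<^bsub>G\<^esub>) * u \<one>\<^bsub>G\<^esub> = (st (u \<one>\<^bsub>G\<^esub>) * u \<one>\<^bsub>G\<^esub>) * u \<one>\<^bsub>G\<^esub>"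
    by (metis mult.assoc)
  then show ?thesis using unitary unit one_in by simp
qed

lemma unitary_rep_inv:
  fixes u :: "'g \<Rightarrow> 'm::semigroup_mult"
  assumes "group G" and unit: "\<forall>x. e * x = x \<and> x * e = x"
    and unitary: "\<forall>g\<in>carrier G. st (u g) * u g = e \<and> u g * st (u g) = e"
    and mult: "\<forall>g\<in>carrier G. \<forall>h\<in>carrier G. u (g \<otimes>\<^bsub>G\<^esub> h) = u g * u h"
    and g: "g \<in> carrier G"
  shows "u (inv\<^bsub>G\<^esub> g) = st (u g)"
proof -
  have left_inv: "u (inv\<^bsub>G\<^esub> g) * u g = e"
    using unitary_rep_one[OF assms(1-4)] mult g \<open>group G\<close>
    by (metis group.inv_closed group.l_inv)
  have "u (inv\<^bsub>G\<^esub> g) = u (inv\<^bsub>G\<^esub> g) * (u g * st (u g))" using unitary g unit by simp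
  also have "\<dots> = st (u g)" using left_inv unit by (simp add: mult.assoc[symmetric])
  finally show ?thesis .
qed

lemma covariant_conj_adjoint:
  fixes u :: "'g \<Rightarrow> 'm::semigroup_mult"
  assumes "group G" and "\<forall>x. e * x = x \<and> x * e = x"
    and "\<forall>g\<in>carrier G. st (u g) * u g = e \<and> u g * st (u g) = e"
    and "\<forall>g\<in>carrier G. \<forall>h\<in>carrier G. u (g \<otimes>\<^bsub>G\<^esub> h) = u g * u h"
    and involutive: "\<forall>x. st (st x) = x"
    and covariant: "\<forall>g\<in>carrier G. \<forall>b. u g * j b * st (u g) = j (\<beta> g b)"
    and g: "g \<in> carrier G"
  shows "st (u g) * j b * u g = j (\<beta> (inv\<^bsub>G\<^esub> g) b)"
  using covariant \<open>group G\<close> g unitary_rep_inv[OF assms(1-4) g] involutive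
  by (metis group.inv_closed)

lemma eventually_ore_netI:
  assumes "p \<in> P" and "\<And>s. s \<in> P \<Longrightarrow> s \<otimes>\<^bsub>G\<^esub> p \<in> P \<Longrightarrow> Q (s \<otimes>\<^bsub>G\<^esub> p)"
  shows "eventually Q (ore_net G P)"
  unfolding ore_net_def
  by (rule eventually_INF1[OF assms(1)]) (auto simp: eventually_principal assms(2))

lemma eventually_in_ore_net:
  assumes "ore_enveloping G P"
  shows "eventually (\<lambda>i. i \<in> P) (ore_net G P)"
  using assms unfolding ore_enveloping_def by (blast intro: eventually_ore_netI)

lemma dilation_inv_unit_fixes_iota:
  assumes "group G" and PG: "P \<subseteq> carrier G" and s: "s \<in> P"
    and unit: "\<forall>x. oneA * x = x \<and> x * oneA = x"
    and beta_hom: "\<forall>g\<in>carrier G. star_hom scB stB scB stB (\<beta> g)"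
    and beta_id: "\<beta> \<one>\<^bsub>G\<^esub> = id"
    and beta_mult: "\<forall>g\<in>carrier G. \<forall>h\<in>carrier G. \<beta> (g \<otimes>\<^bsub>G\<^esub> h) = \<beta> g \<circ> \<beta> h"
    and iota_hom: "star_hom scA stA scB stB \<iota>"
    and dilation: "\<forall>p\<in>P. \<beta> p \<circ> \<iota> = \<iota> \<circ> \<alpha> p"
  shows "\<beta> (inv\<^bsub>G\<^esub> s) (\<iota> oneA) * \<iota> a = \<iota> a \<and> \<iota> a * \<beta> (inv\<^bsub>G\<^esub> s) (\<iota> oneA) = \<iota> a"
proof -
  have sG: "s \<in> carrier G" and isG: "inv\<^bsub>G\<^esub> s \<in> carrier G"
    using s PG \<open>group G\<close> by (auto intro: group.inv_closed)
  have "\<beta> (inv\<^bsub>G\<^esub> s) (\<iota> (\<alpha> s a)) = \<beta> (inv\<^bsub>G\<^esub> s \<otimes>\<^bsub>G\<^esub> s) (\<iota> a)"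
    using dilation s beta_mult isG sG by (metis comp_apply)
  also have "\<dots> = \<iota> a" using \<open>group G\<close> sG beta_id by (simp add: group.l_inv)
  finally have "\<iota> a = \<beta> (inv\<^bsub>G\<^esub> s) (\<iota> (\<alpha> s a))" by simp
  then show ?thesis
    using beta_hom isG iota_hom unit unfolding star_hom_def by metis
qed

lemma dilation_inv_unit_fixes_translate:
  assumes "group G" and PG: "P \<subseteq> carrier G" and s: "s \<in> P" and p: "p \<in> P"
    and "\<forall>x. oneA * x = x \<and> x * oneA = x"
    and beta_hom: "\<forall>g\<in>carrier G. star_hom scB stB scB stB (\<beta> g)"
    and "\<beta> \<one>\<^bsub>G\<^esub> = id"
    and beta_mult: "\<forall>g\<in>carrier G. \<forall>h\<in>carrier G. \<beta> (g \<otimes>\<^bsub>G\<^esub> h) = \<beta> g \<circ> \<beta> h"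
    and "star_hom scA stA scB stB \<iota>"
    and "\<forall>p\<in>P. \<beta> p \<circ> \<iota> = \<iota> \<circ> \<alpha> p"
    and x: "x = \<beta> (inv\<^bsub>G\<^esub> p) (\<iota> a)"
  shows "\<beta> (inv\<^bsub>G\<^esub> (s \<otimes>\<^bsub>G\<^esub> p)) (\<iota> oneA) * x = x \<and> x * \<beta> (inv\<^bsub>G\<^esub> (s \<otimes>\<^bsub>G\<^esub> p)) (\<iota> oneA) = x"
proof -
  have sG: "s \<in> carrier G" and pG: "p \<in> carrier G" using s p PG by auto
  then have isG: "inv\<^bsub>G\<^esub> s \<in> carrier G" and ipG: "inv\<^bsub>G\<^esub> p \<in> carrier G"
    using \<open>group G\<close> by (auto intro: group.inv_closed)
  have "\<beta> (inv\<^bsub>G\<^esub> (s \<otimes>\<^bsub>G\<^esub> p)) = \<beta> (inv\<^bsub>G\<^esub> p) \<circ> \<beta> (inv\<^bsub>G\<^esub> s)"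
    using \<open>group G\<close> sG pG isG ipG beta_mult by (simp add: group.inv_mult_group)
  moreover have "\<beta> (inv\<^bsub>G\<^esub> p) (y * z) = \<beta> (inv\<^bsub>G\<^esub> p) y * \<beta> (inv\<^bsub>G\<^esub> p) z" for y z
    using beta_hom ipG unfolding star_hom_def by blast
  ultimately show ?thesis
    using dilation_inv_unit_fixes_iota[OF assms(1-3,5-10)] x by (metis comp_apply)
qed

theorem lemma1p2:
  fixes G :: "('g, 'z) monoid_scheme" and P :: "'g set"
    and scA :: "complex \<Rightarrow> 'a::{real_normed_algebra,banach} \<Rightarrow> 'a" and stA :: "'a \<Rightarrow> 'a"
    and oneA :: 'a
    and scB :: "complex \<Rightarrow> 'b::{real_normed_algebra,banach} \<Rightarrow> 'b" and stB :: "'b \<Rightarrow> 'b"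
    and scM :: "complex \<Rightarrow> 'm::{real_normed_algebra,banach} \<Rightarrow> 'm" and stM :: "'m \<Rightarrow> 'm"
    and oneM :: 'm
    and \<alpha> :: "'g \<Rightarrow> 'a \<Rightarrow> 'a" and \<beta> :: "'g \<Rightarrow> 'b \<Rightarrow> 'b" and \<iota> :: "'a \<Rightarrow> 'b"
    and j :: "'b \<Rightarrow> 'm" and u :: "'g \<Rightarrow> 'm"
  assumes ore: "ore_enveloping G P"
    and A: "cstar_algebra scA stA" and unitA: "\<forall>x. oneA * x = x \<and> x * oneA = x"
    and B: "cstar_algebra scB stB"
    and alpha_hom: "\<forall>p\<in>P. star_hom scA stA scA stA (\<alpha> p) \<and> inj (\<alpha> p)"
    and alpha_id: "\<alpha> \<one>\<^bsub>G\<^esub> = id"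
    and alpha_mult: "\<forall>p\<in>P. \<forall>q\<in>P. \<alpha> (p \<otimes>\<^bsub>G\<^esub> q) = \<alpha> p \<circ> \<alpha> q"
    and beta_aut: "\<forall>g\<in>carrier G. star_aut scB stB (\<beta> g)"
    and beta_id: "\<beta> \<one>\<^bsub>G\<^esub> = id"
    and beta_mult: "\<forall>g\<in>carrier G. \<forall>h\<in>carrier G. \<beta> (g \<otimes>\<^bsub>G\<^esub> h) = \<beta> g \<circ> \<beta> h"
    and iota_hom: "star_hom scA stA scB stB \<iota>" and iota_inj: "inj \<iota>"
    and dilation: "\<forall>p\<in>P. \<beta> p \<circ> \<iota> = \<iota> \<circ> \<alpha> p"
    and minimal: "closure (\<Union>p\<in>P. \<beta> (inv\<^bsub>G\<^esub> p) ` range \<iota>) = UNIV"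
    and M: "cstar_algebra scM stM" and unitM: "\<forall>x. oneM * x = x \<and> x * oneM = x"
    and j_hom: "star_hom scB stB scM stM j" and j_inj: "inj j"
    and u_unitary: "\<forall>g\<in>carrier G. stM (u g) * u g = oneM \<and> u g * stM (u g) = oneM"
    and u_mult: "\<forall>g\<in>carrier G. \<forall>h\<in>carrier G. u (g \<otimes>\<^bsub>G\<^esub> h) = u g * u h"
    and covariant: "\<forall>g\<in>carrier G. \<forall>b. u g * j b * stM (u g) = j (\<beta> g b)"
  shows "(\<forall>p\<in>P. stM (u p) * j (\<iota> oneA) * u p \<in> range j) \<and>
         approximate_unit stB P (ore_net G P) (\<lambda>p. the_inv j (stM (u p) * j (\<iota> oneA) * u p))"
proof -
  have grp: "group G" and PG: "P \<subseteq> carrier G"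
    using ore unfolding ore_enveloping_def by blast+
  have beta_hom: "\<forall>g\<in>carrier G. star_hom scB stB scB stB (\<beta> g)"
    using beta_aut unfolding star_aut_def by blast
  define e where "e p = \<beta> (inv\<^bsub>G\<^esub> p) (\<iota> oneA)" for p
  have conj: "stM (u p) * j (\<iota> oneA) * u p = j (e p)" if "p \<in> P" for p
    unfolding e_def using covariant_conj_adjoint[OF grp unitM u_unitary u_mult _ covariant] M
      that PG by (auto simp: cstar_algebra_def)
  have "\<iota> oneA = stB (\<iota> oneA) * \<iota> oneA"
    using star_hom_eq_star_mult_self[OF iota_hom] cstar_star_unit[OF A unitA] unitA by metis
  then have proj: "e p = stB (e p) * e p" if "p \<in> P" for p
    unfolding e_def using star_hom_eq_star_mult_self beta_hom that PG grp
    by (metis group.inv_closed subsetD)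
  have "\<forall>x\<in>(\<Union>p\<in>P. \<beta> (inv\<^bsub>G\<^esub> p) ` range \<iota>).
      eventually (\<lambda>q. e q * x = x \<and> x * e q = x) (ore_net G P)"
    unfolding e_def
    using dilation_inv_unit_fixes_translate[OF grp PG _ _ unitA beta_hom beta_id beta_mult
        iota_hom dilation]
    by (blast intro: eventually_ore_netI)
  then have "approximate_unit stB P (ore_net G P) e"
    using proj cstar_norm_le_one_if_eq_star_mult_self[OF B]
    by (intro approximate_unit_fixing_dense[OF _ eventually_in_ore_net[OF ore] minimal]) blast+
  moreover have "the_inv j (stM (u p) * j (\<iota> oneA) * u p) = e p" if "p \<in> P" for p
    using conj[OF that] j_inj by (simp add: the_inv_f_f)
  then have "approximate_unit stB P (ore_net G P) (\<lambda>p. the_inv j (stM (u p) * j (\<iota> oneA) * u p))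
      \<longleftrightarrow> approximate_unit stB P (ore_net G P) e"
    by (rule approximate_unit_cong[OF eventually_in_ore_net[OF ore]])
  ultimately show ?thesis using conj by auto
qed

end
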